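(* Let $s\ge4$ be an integer, $\psi_s(z):=z^{s-1}(z+s)-(s-1)^{s-1}$, and $\rho_m:=\min\{|s+\alpha|:\alpha$ a root of $\psi_s$ with $\operatorname{Im}\alpha>0\}$. (1) If $s$ is even then $\rho_m>s\sin(\pi/(s-1))>\pi$. (2) If $s\ge7$ is odd then $\rho_m>s\sin(2\pi/(s-1))$; if $s=5$ then $\rho_m>5\sin(2\pi/5)$.
   Context: For $s\ge4$, $\psi_s$ has $\lfloor s/2\rfloor-1\ge1$ roots in the open upper half-plane. *)

theory Defs
  imports "HOL-Analysis.Analysis"
begin

definition psi :: "nat \<Rightarrow> complex \<Rightarrow> complex" where
  "psi s z = z ^ (s - 1) * (z + of_nat s) - (of_nat s - 1) ^ (s - 1)"

definition rho_m :: "nat \<Rightarrow> real" where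
  "rho_m s = Min {cmod (of_nat s + \<alpha>) | \<alpha>. psi s \<alpha> = 0 \<and> Im \<alpha> > 0}"

end

theory Submission
  imports Defs
begin

text \<open>
  Put \<open>s = n + 1\<close>, so the roots of \<open>psi s\<close> solve \<open>z^n (z + n + 1) = n^n\<close>. A root \<open>\<alpha>\<close> in
  the upper half-plane is \<open>\<alpha> = -r e^(-it)\<close> with \<open>0 < t < pi\<close>, \<open>t = pi - Arg \<alpha>\<close>, and then
  \<open>r sin((n+1)t) = (n+1) sin(nt)\<close> and \<open>r^n ((n+1) cos(nt) - r cos((n+1)t)) = (-1)^n n^n\<close>.
  For odd \<open>n\<close> these force \<open>sin(nt) < 0\<close>, so \<open>t > pi/n\<close>. For even \<open>n\<close>, \<open>t \<le> 2 pi/n\<close> would put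
  \<open>nt\<close> and \<open>(n+1)t\<close> into \<open>(0, pi)\<close>, where the decrease of \<open>sin u / u\<close> gives \<open>r > n\<close> and
  \<open>(n+1) cos(nt) - r cos((n+1)t) > 1\<close>, contradicting the second equation.
  So \<open>Arg \<alpha> < pi - \<beta>\<close> with \<open>\<beta> = pi/n\<close> resp. \<open>2 pi/n\<close>, and such a point is at distance more
  than \<open>s sin \<beta>\<close> from \<open>-s\<close>. The minimum defining \<open>rho_m s\<close> ranges over a finite set, which is
  nonempty by the intermediate value theorem applied after eliminating \<open>r\<close>.
\<close>

lemma x_cos_less_sin:
  fixes u :: real
  assumes "0 < u" "u \<le> pi"
  shows "u * cos u < sin u"
proof -
  have "(\<lambda>x. x * cos x - sin x) u < (\<lambda>x. x * cos x - sin x) 0"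
  proof (rule DERIV_neg_imp_decreasing_open[OF assms(1)])
    fix x :: real
    assume x: "0 < x" "x < u"
    have "((\<lambda>x. x * cos x - sin x) has_real_derivative - x * sin x) (at x)"
      by (auto intro!: derivative_eq_intros)
    moreover have "0 < sin x"
      using x assms by (intro sin_gt_zero) auto
    ultimately show "\<exists>y. ((\<lambda>x. x * cos x - sin x) has_real_derivative y) (at x) \<and> y < 0"
      using x by (intro exI[of _ "- x * sin x"]) auto
  qed (intro continuous_intros)
  then show ?thesis
    by simp
qed

lemma sin_ratio_strict_decreasing:
  fixes x y :: real
  assumes "0 < x" "x < y" "y \<le> pi"
  shows "x * sin y < y * sin x"
proof -
  have "(\<lambda>u. sin u / u) y < (\<lambda>u. sin u / u) x"
  proof (rule DERIV_neg_imp_decreasing_open[OF assms(2)])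
    fix u :: real
    assume u: "x < u" "u < y"
    then have "((\<lambda>u. sin u / u) has_real_derivative (u * cos u - sin u) / u\<^sup>2) (at u)"
      using assms by (auto intro!: derivative_eq_intros simp: power2_eq_square algebra_simps)
    moreover have "(u * cos u - sin u) / u\<^sup>2 < 0"
      using x_cos_less_sin[of u] u assms by (simp add: divide_neg_pos)
    ultimately show "\<exists>d. ((\<lambda>u. sin u / u) has_real_derivative d) (at u) \<and> d < 0"
      by blast
  next
    show "continuous_on {x..y} (\<lambda>u. sin u / u)"
      using assms by (intro continuous_intros) auto
  qed
  then show ?thesis
    using assms by (simp add: divide_simps mult.commute)
qed

lemma sin_ge_cubic:
  fixes x :: real
  assumes "0 \<le> x"
  shows "x - x ^ 3 / 6 \<le> sin x"
proof -
  obtain t where t: "sin x = (\<Sum>m<3. sin_coeff m * x ^ m) + sin (t + 1/2 * real 3 * pi) / fact 3 * x ^ 3"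
    using Maclaurin_sin_expansion[of x 3] by blast
  have "sin (t + 1/2 * real 3 * pi) = sin ((t + pi / 2) + pi)"
    by (rule arg_cong[of _ _ sin]) simp
  also have "\<dots> = - cos t"
    by (simp only: sin_periodic_pi) (simp add: sin_add)
  finally have "sin (t + 1/2 * real 3 * pi) = - cos t" .
  moreover have "(\<Sum>m<3. sin_coeff m * x ^ m) = x"
    by (simp add: sin_coeff_def eval_nat_numeral)
  ultimately have "sin x = x - cos t * x ^ 3 / 6"
    using t by (simp add: eval_nat_numeral)
  moreover have "cos t * x ^ 3 \<le> x ^ 3"
    using assms mult_right_mono[of "cos t" 1 "x ^ 3"] by auto
  ultimately show ?thesis
    by simp
qed

lemma pi_less_Suc_mult_sin_pi_div:
  fixes n :: nat
  assumes "n \<ge> 3"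
  shows "pi < real (Suc n) * sin (pi / real n)"
proof -
  define u where "u = real n"
  have u: "u \<ge> 3"
    using assms by (simp add: u_def)
  have "pi\<^sup>2 < 3.15\<^sup>2"
    using pi_approx pi_gt_zero by (intro power_strict_mono) auto
  then have "pi\<^sup>2 * (u + 1) < 10 * (u + 1)"
    using u by (intro mult_strict_right_mono) (auto simp: power2_eq_square)
  also have "\<dots> \<le> 6 * u\<^sup>2"
  proof -
    have "3 * u \<le> u * u"
      using u by (intro mult_right_mono) auto
    then show ?thesis
      using u unfolding power2_eq_square by (smt (verit))
  qed
  finally have "0 < pi * (6 * u\<^sup>2 - pi\<^sup>2 * (u + 1)) / (6 * u ^ 3)"
    using u by simp
  also have "\<dots> = (u + 1) * (pi / u - (pi / u) ^ 3 / 6) - pi"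
    using u by (simp add: field_simps power2_eq_square power3_eq_cube)
  finally have "pi < (u + 1) * (pi / u - (pi / u) ^ 3 / 6)"
    by simp
  also have "\<dots> \<le> (u + 1) * sin (pi / u)"
    using sin_ge_cubic[of "pi / u"] u by (intro mult_left_mono) auto
  finally show ?thesis
    by (simp add: u_def add.commute)
qed

lemma sin_diff_combination:
  fixes r a x t :: real
  assumes "r * sin ((x + 1) * t) = a * sin (x * t)"
  shows "sin ((x + 1) * t) * (a * cos (x * t) - r * cos ((x + 1) * t)) = a * sin t"
proof -
  have "sin ((x + 1) * t) * (a * cos (x * t) - r * cos ((x + 1) * t))
      = a * (sin ((x + 1) * t) * cos (x * t)) - cos ((x + 1) * t) * (r * sin ((x + 1) * t))"
    by (simp add: algebra_simps)
  also have "\<dots> = a * (sin ((x + 1) * t) * cos (x * t) - cos ((x + 1) * t) * sin (x * t))"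
    unfolding assms by (simp add: algebra_simps)
  also have "\<dots> = a * sin ((x + 1) * t - x * t)"
    by (simp only: sin_diff)
  finally show ?thesis
    by (simp add: algebra_simps)
qed

lemma rcis_power_mult_affine:
  fixes n :: nat and r \<phi> a b :: real
  defines "z \<equiv> rcis r \<phi> ^ n * (of_real a + of_real b * rcis r \<phi>)"
  shows "Re z = r ^ n * (a * cos (real n * \<phi>) + b * r * cos ((real n + 1) * \<phi>))"
    and "Im z = r ^ n * (a * sin (real n * \<phi>) + b * r * sin ((real n + 1) * \<phi>))"
proof -
  have "z = of_real a * rcis (r ^ n) (real n * \<phi>) + of_real b * rcis (r ^ n * r) (real n * \<phi> + \<phi>)"
    unfolding z_def DeMoivre2 rcis_mult[symmetric] by (simp add: algebra_simps)
  then show "Re z = r ^ n * (a * cos (real n * \<phi>) + b * r * cos ((real n + 1) * \<phi>))"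
    and "Im z = r ^ n * (a * sin (real n * \<phi>) + b * r * sin ((real n + 1) * \<phi>))"
    by (simp_all add: algebra_simps)
qed

lemma sin_pos_imp_less_pi:
  fixes x :: real
  assumes "0 < sin x" "0 \<le> x" "x \<le> 2 * pi"
  shows "x < pi"
proof (rule ccontr)
  assume "\<not> x < pi"
  then have "sin x \<le> 0"
    using assms(3) by (cases "x = 2 * pi") (auto intro: sin_le_zero)
  with assms(1) show False
    by simp
qed

text \<open>\<open>(r, t)\<close> are the polar coordinates of \<open>w = -cnj \<alpha>\<close>, which solves \<open>w^n (n + 1 - w) = (-1)^n n^n\<close>.\<close>

lemma polar_solution_angle_gt_odd:
  fixes n :: nat and r t :: real
  assumes "odd n" "0 < r" "0 < t" "t < pi"
    and im: "r * sin ((real n + 1) * t) = (real n + 1) * sin (real n * t)"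
    and re: "r ^ n * ((real n + 1) * cos (real n * t) - r * cos ((real n + 1) * t)) = - (real n ^ n)"
  shows "pi / real n < t"
proof -
  define Y where "Y = (real n + 1) * cos (real n * t) - r * cos ((real n + 1) * t)"
  have n: "real n \<ge> 1"
    using \<open>odd n\<close> by (cases n) auto
  have "r ^ n * Y < 0"
    using re n by (simp add: Y_def)
  then have "Y < 0"
    using \<open>0 < r\<close> by (simp add: mult_less_0_iff)
  moreover have "0 < sin ((real n + 1) * t) * Y"
    unfolding Y_def sin_diff_combination[OF im] using \<open>0 < t\<close> \<open>t < pi\<close> by (simp add: sin_gt_zero)
  ultimately have "sin ((real n + 1) * t) < 0"
    by (simp add: zero_less_mult_iff)
  then have "(real n + 1) * sin (real n * t) < 0"
    using im \<open>0 < r\<close> by (metis mult_pos_neg)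
  then have "sin (real n * t) < 0"
    by (simp add: mult_less_0_iff)
  then have "\<not> real n * t \<le> pi"
    using \<open>0 < t\<close> n by (auto dest: sin_ge_zero[rotated])
  then show ?thesis
    using n by (simp add: field_simps)
qed

lemma small_angle_polar_solution_bounds:
  fixes n :: nat and r t :: real
  assumes "0 < n" "0 < t" "(real n + 1) * t < pi"
    and im: "r * sin ((real n + 1) * t) = (real n + 1) * sin (real n * t)"
  shows "real n < r" and "1 < (real n + 1) * cos (real n * t) - r * cos ((real n + 1) * t)"
proof -
  define S where "S = sin ((real n + 1) * t)"
  have n: "real n \<ge> 1"
    using \<open>0 < n\<close> by simp
  have "0 < S"
    unfolding S_def using assms n by (intro sin_gt_zero) auto
  have "real n * t * S < (real n + 1) * t * sin (real n * t)"
    unfolding S_def using assms n by (intro sin_ratio_strict_decreasing) auto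
  then have "t * (real n * S) < t * (r * S)"
    using im by (simp add: S_def algebra_simps)
  with \<open>0 < t\<close> \<open>0 < S\<close> show "real n < r"
    by simp
  have "t * S < (real n + 1) * t * sin t"
    unfolding S_def using assms n by (intro sin_ratio_strict_decreasing) auto
  also have "\<dots> = t * (S * ((real n + 1) * cos (real n * t) - r * cos ((real n + 1) * t)))"
    unfolding S_def sin_diff_combination[OF im] by (simp add: algebra_simps)
  finally show "1 < (real n + 1) * cos (real n * t) - r * cos ((real n + 1) * t)"
    using \<open>0 < t\<close> \<open>0 < S\<close> by (simp add: mult_less_cancel_left_pos)
qed

lemma polar_solution_angle_gt_even:
  fixes n :: nat and r t :: real
  assumes "even n" "0 < r" "0 < t" "t < pi"
    and im: "r * sin ((real n + 1) * t) = (real n + 1) * sin (real n * t)"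
    and re: "r ^ n * ((real n + 1) * cos (real n * t) - r * cos ((real n + 1) * t)) = real n ^ n"
  shows "2 * pi / real n < t"
proof (rule ccontr)
  assume "\<not> 2 * pi / real n < t"
  moreover have "n \<noteq> 0"
    using \<open>0 < t\<close> \<open>\<not> 2 * pi / real n < t\<close> by (cases n) auto
  ultimately have t_le: "real n * t \<le> 2 * pi"
    by (simp add: not_less pos_le_divide_eq mult.commute)
  have "n \<ge> 2"
    using \<open>even n\<close> \<open>n \<noteq> 0\<close> by presburger
  then have n: "real n \<ge> 2"
    by simp
  define Y where "Y = (real n + 1) * cos (real n * t) - r * cos ((real n + 1) * t)"
  have "0 < r ^ n * Y"
    using re n by (simp add: Y_def)
  then have "0 < Y"
    using \<open>0 < r\<close> by (simp add: zero_less_mult_iff)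
  moreover have "0 < sin ((real n + 1) * t) * Y"
    unfolding Y_def sin_diff_combination[OF im] using \<open>0 < t\<close> \<open>t < pi\<close> by (simp add: sin_gt_zero)
  ultimately have S1: "0 < sin ((real n + 1) * t)"
    by (simp add: zero_less_mult_iff)
  then have "0 < (real n + 1) * sin (real n * t)"
    using im \<open>0 < r\<close> by (metis mult_pos_pos)
  then have "0 < sin (real n * t)"
    by (simp add: zero_less_mult_iff)
  then have "real n * t < pi"
    using sin_pos_imp_less_pi \<open>0 < t\<close> t_le by simp
  moreover have "2 * t \<le> real n * t"
    using n \<open>0 < t\<close> by (intro mult_right_mono) auto
  ultimately have "(real n + 1) * t < 2 * pi"
    using \<open>0 < t\<close> unfolding distrib_right by linarith
  then have "(real n + 1) * t < pi"
    using sin_pos_imp_less_pi[OF S1] \<open>0 < t\<close> by simp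
  then have "real n < r" and "1 < Y"
    using small_angle_polar_solution_bounds[OF _ \<open>0 < t\<close> _ im] \<open>n \<noteq> 0\<close> by (auto simp: Y_def)
  have "real n ^ n < r ^ n"
    using \<open>real n < r\<close> \<open>n \<noteq> 0\<close> by (intro power_strict_mono) auto
  also have "\<dots> < r ^ n * Y"
    using \<open>1 < Y\<close> \<open>0 < r\<close> by simp
  finally show False
    using re by (simp add: Y_def)
qed

lemma psi_Suc_eq_0_iff: "psi (Suc n) z = 0 \<longleftrightarrow> z ^ n * (z + of_nat (Suc n)) = of_nat n ^ n"
  by (simp add: psi_def)

lemma minus_cnj_rcis: "- cnj (rcis r \<theta>) = rcis r (pi - \<theta>)"
  by (simp add: complex_eq_iff rcis_def cos_diff sin_diff)

lemma Arg_psi_root_less: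
  fixes n :: nat and \<alpha> :: complex
  assumes root: "psi (Suc n) \<alpha> = 0" and "0 < Im \<alpha>"
  shows "(odd n \<longrightarrow> Arg \<alpha> < pi - pi / real n) \<and> (even n \<longrightarrow> Arg \<alpha> < pi - 2 * pi / real n)"
proof -
  define r where "r = cmod \<alpha>"
  define t where "t = pi - Arg \<alpha>"
  define w where "w = rcis r t"
  have "0 < r" "0 < t" "t < pi"
    using \<open>0 < Im \<alpha>\<close> Arg_lt_pi[of \<alpha>] by (auto simp: r_def t_def)
  have "\<alpha> = - cnj w"
    unfolding w_def minus_cnj_rcis by (simp add: r_def t_def rcis_cmod_Arg)
  with root have "cnj ((- w) ^ n * (of_nat (Suc n) - w)) = of_nat n ^ n"
    unfolding psi_Suc_eq_0_iff by (simp add: algebra_simps)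
  then have "(-1) ^ n * (w ^ n * (of_nat (Suc n) - w)) = of_nat n ^ n"
    by (metis complex_cnj_cnj complex_cnj_of_nat complex_cnj_power power_minus mult.assoc)
  then have "w ^ n * (of_nat (Suc n) - w) = (-1) ^ n * of_nat n ^ n"
    by (metis left_minus_one_mult_self)
  then have X: "w ^ n * (of_real (real n + 1) + of_real (- 1) * w) = of_real ((-1) ^ n * real n ^ n)"
    by (simp add: add.commute)
  have "r ^ n * ((real n + 1) * sin (real n * t) + - 1 * r * sin ((real n + 1) * t)) = 0"
    using arg_cong[OF X, of Im] unfolding w_def rcis_power_mult_affine(2) by simp
  then have im: "r * sin ((real n + 1) * t) = (real n + 1) * sin (real n * t)"
    using \<open>0 < r\<close> by simp
  have re: "r ^ n * ((real n + 1) * cos (real n * t) - r * cos ((real n + 1) * t)) = (-1) ^ n * real n ^ n"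
    using arg_cong[OF X, of Re] unfolding w_def rcis_power_mult_affine(1) by simp
  have "Arg \<alpha> = pi - t"
    by (simp add: t_def)
  then show ?thesis
    using polar_solution_angle_gt_odd[OF _ \<open>0 < r\<close> \<open>0 < t\<close> \<open>t < pi\<close> im]
      polar_solution_angle_gt_even[OF _ \<open>0 < r\<close> \<open>0 < t\<close> \<open>t < pi\<close> im] re
    by auto
qed

text \<open>The equation left after eliminating \<open>r = (n+1) (-sin(n\<theta>)) / sin((n+1)\<theta>)\<close> from the polar
  form of \<open>(rcis r \<theta>)^n (rcis r \<theta> + n + 1) = n^n\<close>.\<close>

lemma exists_balanced_angle:
  fixes n :: nat
  assumes "n \<ge> 3"
  shows "\<exists>\<theta>. 2 * pi / (real n + 1) < \<theta> \<and> \<theta> < 2 * pi / real n \<and>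
           (real n + 1) ^ Suc n * (- sin (real n * \<theta>)) ^ n * sin \<theta> = real n ^ n * sin ((real n + 1) * \<theta>) ^ Suc n"
proof -
  define F where "F \<theta> = (real n + 1) ^ Suc n * (- sin (real n * \<theta>)) ^ n * sin \<theta>
      - real n ^ n * sin ((real n + 1) * \<theta>) ^ Suc n" for \<theta>
  define a where "a = 2 * pi / (real n + 1)"
  define b where "b = 2 * pi / real n"
  have n: "real n \<ge> 3"
    using assms by simp
  have "0 < a" "a < b" "b < pi"
    using n by (auto simp: a_def b_def field_simps)
  then have "0 < sin a" "0 < sin b"
    by (auto intro: sin_gt_zero)
  have "real n * a = 2 * pi - a" "(real n + 1) * a = 2 * pi"
    using n by (simp_all add: a_def field_simps)
  then have "F a = (real n + 1) ^ Suc n * sin a ^ Suc n"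
    by (simp add: F_def sin_diff)
  with \<open>0 < sin a\<close> have "0 < F a"
    by simp
  have "real n * b = 2 * pi" "(real n + 1) * b = b + 2 * pi"
    using n by (simp_all add: b_def field_simps)
  then have "F b = - (real n ^ n * sin b ^ Suc n)"
    using n by (simp add: F_def)
  with \<open>0 < sin b\<close> n have "F b < 0"
    by simp
  have "continuous_on {a..b} F"
    unfolding F_def by (intro continuous_intros)
  then obtain \<theta> where "a \<le> \<theta>" "\<theta> \<le> b" "F \<theta> = 0"
    using IVT2'[of F b 0 a] \<open>0 < F a\<close> \<open>F b < 0\<close> \<open>a < b\<close> by auto
  moreover have "\<theta> \<noteq> a" "\<theta> \<noteq> b"
    using \<open>F \<theta> = 0\<close> \<open>0 < F a\<close> \<open>F b < 0\<close> by auto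
  ultimately show ?thesis
    unfolding a_def b_def F_def by (intro exI[of _ \<theta>]) auto
qed

lemma psi_has_root_in_upper_half_plane:
  fixes n :: nat
  assumes "n \<ge> 3"
  shows "\<exists>\<alpha>. psi (Suc n) \<alpha> = 0 \<and> 0 < Im \<alpha>"
proof -
  have n: "real n \<ge> 3"
    using assms by simp
  obtain \<theta> where lower: "2 * pi / (real n + 1) < \<theta>" and upper: "\<theta> < 2 * pi / real n"
    and balanced: "(real n + 1) ^ Suc n * (- sin (real n * \<theta>)) ^ n * sin \<theta>
                   = real n ^ n * sin ((real n + 1) * \<theta>) ^ Suc n"
    using exists_balanced_angle[OF assms] by blast
  define D where "D = - sin (real n * \<theta>)"
  define S where "S = sin ((real n + 1) * \<theta>)"
  define r where "r = (real n + 1) * D / S"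
  have "0 < 2 * pi / (real n + 1)"
    by simp
  with lower have "0 < \<theta>"
    by linarith
  have "2 * pi / real n < pi"
    using n by (simp add: field_simps)
  with upper have "\<theta> < pi"
    by linarith
  have "2 * pi < (real n + 1) * \<theta>" "real n * \<theta> < 2 * pi"
    using lower upper n by (simp_all add: pos_divide_less_eq pos_less_divide_eq mult.commute)
  then have "pi < real n * \<theta>" "(real n + 1) * \<theta> - 2 * pi < pi"
    using \<open>\<theta> < pi\<close> by (simp_all add: distrib_right)
  with \<open>2 * pi < (real n + 1) * \<theta>\<close> \<open>real n * \<theta> < 2 * pi\<close> have "0 < D" "0 < S"
    using sin_lt_zero[of "real n * \<theta>"] sin_gt_zero[of "(real n + 1) * \<theta> - 2 * pi"]
    by (auto simp: D_def S_def sin_diff)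
  then have "0 < r"
    using n by (simp add: r_def)
  have rS: "r * S = (real n + 1) * D"
    using \<open>0 < S\<close> by (simp add: r_def)
  then have im: "r * S + (real n + 1) * sin (real n * \<theta>) = 0"
    by (simp add: D_def)
  define X where "X = (real n + 1) * cos (real n * \<theta>) + r * cos ((real n + 1) * \<theta>)"
  have SX: "S * X = (real n + 1) * sin \<theta>"
    using sin_diff_combination[of "- r" "real n" \<theta> "real n + 1"] im by (simp add: S_def X_def)
  have "r ^ n * X * S ^ Suc n = (r * S) ^ n * (S * X)"
    by (simp add: power_mult_distrib algebra_simps)
  also have "\<dots> = (real n + 1) ^ Suc n * D ^ n * sin \<theta>"
    unfolding rS SX power_mult_distrib by (simp add: algebra_simps)
  also have "\<dots> = real n ^ n * S ^ Suc n"
    using balanced by (simp add: D_def S_def)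
  finally have re: "r ^ n * X = real n ^ n"
    using \<open>0 < S\<close> by simp
  have "rcis r \<theta> ^ n * (of_real (real n + 1) + of_real 1 * rcis r \<theta>) = of_real (real n ^ n)"
  proof (rule complex_eqI)
    show "Re (rcis r \<theta> ^ n * (of_real (real n + 1) + of_real 1 * rcis r \<theta>)) = Re (of_real (real n ^ n))"
      unfolding rcis_power_mult_affine using re by (simp add: X_def algebra_simps)
    show "Im (rcis r \<theta> ^ n * (of_real (real n + 1) + of_real 1 * rcis r \<theta>)) = Im (of_real (real n ^ n))"
      unfolding rcis_power_mult_affine using im by (simp add: S_def algebra_simps)
  qed
  moreover have "0 < Im (rcis r \<theta>)"
    using \<open>0 < r\<close> \<open>0 < \<theta>\<close> \<open>\<theta> < pi\<close> by (simp add: sin_gt_zero)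
  ultimately show ?thesis
    by (intro exI[of _ "rcis r \<theta>"]) (simp add: psi_Suc_eq_0_iff add.commute)
qed

lemma finite_psi_roots: "finite {z. psi s z = 0}"
proof -
  define p where "p = monom 1 (s - 1) * [:of_nat s, 1:] - [:(of_nat s - 1) ^ (s - 1) :: complex:]"
  have "coeff p (Suc (s - 1)) = 1"
    by (simp add: p_def coeff_monom_mult)
  then have "p \<noteq> 0"
    by auto
  moreover have "poly p z = psi s z" for z
    by (simp add: p_def psi_def poly_monom algebra_simps)
  ultimately show ?thesis
    using poly_roots_finite[of p] by simp
qed

lemma less_rho_m:
  assumes "\<exists>\<alpha>. psi s \<alpha> = 0 \<and> 0 < Im \<alpha>"
    and "\<And>\<alpha>. psi s \<alpha> = 0 \<Longrightarrow> 0 < Im \<alpha> \<Longrightarrow> c < cmod (of_nat s + \<alpha>)"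
  shows "c < rho_m s"
proof -
  have "{cmod (of_nat s + \<alpha>) | \<alpha>. psi s \<alpha> = 0 \<and> 0 < Im \<alpha>}
      = (\<lambda>\<alpha>. cmod (of_nat s + \<alpha>)) ` {\<alpha>. psi s \<alpha> = 0 \<and> 0 < Im \<alpha>}"
    by blast
  moreover have "finite {\<alpha>. psi s \<alpha> = 0 \<and> 0 < Im \<alpha>}"
    using finite_psi_roots by (rule rev_finite_subset) auto
  ultimately show ?thesis
    unfolding rho_m_def using assms by (subst Min_gr_iff) auto
qed

lemma mult_sin_less_cmod_add:
  fixes s \<beta> :: real and z :: complex
  assumes "0 < s" "0 < Im z" "Arg z < pi - \<beta>" "0 < \<beta>" "\<beta> \<le> pi / 2"
  shows "s * sin \<beta> < cmod (of_real s + z)"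
proof (cases "Arg z < pi / 2")
  case True
  have "0 < Arg z"
    using \<open>0 < Im z\<close> Arg_lt_pi by blast
  with True have "0 < cos (Arg z)"
    by (intro cos_gt_zero) auto
  moreover have "0 < cmod z"
    using \<open>0 < Im z\<close> by auto
  ultimately have "0 < Re z"
    by (metis Re_rcis rcis_cmod_Arg mult_pos_pos)
  then have "s < cmod (of_real s + z)"
    using abs_Re_le_cmod[of "of_real s + z"] by simp
  moreover have "s * sin \<beta> \<le> s"
    using \<open>0 < s\<close> by (simp add: mult_left_le_one_le)
  ultimately show ?thesis
    by linarith
next
  case False
  define \<theta> where "\<theta> = Arg z"
  have "Im (cis (- \<theta>) * (of_real s + rcis (cmod z) \<theta>)) = - (s * sin \<theta>)"
    by (simp add: rcis_def algebra_simps)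
  then have "Im (cis (- \<theta>) * (of_real s + z)) = - (s * sin \<theta>)"
    by (simp add: \<theta>_def rcis_cmod_Arg)
  then have "s * sin \<theta> \<le> cmod (of_real s + z)"
    using abs_Im_le_cmod[of "cis (- \<theta>) * (of_real s + z)"] by (simp add: norm_mult)
  moreover have "sin \<beta> < sin (pi - \<theta>)"
    using False assms by (intro sin_monotone_2pi) (auto simp: \<theta>_def)
  then have "s * sin \<beta> < s * sin \<theta>"
    using \<open>0 < s\<close> by simp
  ultimately show ?thesis
    by linarith
qed

lemma mult_sin_less_rho_m:
  fixes n :: nat and \<beta> :: real
  assumes "n \<ge> 3" "0 < \<beta>" "\<beta> \<le> pi / 2"
    and Arg_less: "\<And>\<alpha>. psi (Suc n) \<alpha> = 0 \<Longrightarrow> 0 < Im \<alpha> \<Longrightarrow> Arg \<alpha> < pi - \<beta>"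
  shows "real (Suc n) * sin \<beta> < rho_m (Suc n)"
proof (rule less_rho_m)
  show "\<exists>\<alpha>. psi (Suc n) \<alpha> = 0 \<and> 0 < Im \<alpha>"
    using \<open>n \<ge> 3\<close> by (rule psi_has_root_in_upper_half_plane)
  fix \<alpha>
  assume "psi (Suc n) \<alpha> = 0" "0 < Im \<alpha>"
  then show "real (Suc n) * sin \<beta> < cmod (of_nat (Suc n) + \<alpha>)"
    using mult_sin_less_cmod_add[of "real (Suc n)" \<alpha> \<beta>] Arg_less assms(2,3) by simp
qed

theorem mainTheorem18:
  fixes s :: nat
  assumes "s \<ge> 4"
  shows "(even s \<longrightarrow> rho_m s > real s * sin (pi / (real s - 1)) \<and> real s * sin (pi / (real s - 1)) > pi)
       \<and> (odd s \<and> s \<ge> 7 \<longrightarrow> rho_m s > real s * sin (2 * pi / (real s - 1)))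
       \<and> (s = 5 \<longrightarrow> rho_m s > 5 * sin (2 * pi / 5))"
proof -
  obtain n where s: "s = Suc n" and n: "n \<ge> 3"
    using assms by (cases s) auto
  have s_minus_1: "real s - 1 = real n"
    using s by simp
  note Arg_less = Arg_psi_root_less[where n = n, folded s]
  have "even s \<Longrightarrow> real s * sin (pi / real n) < rho_m s"
    unfolding s using n Arg_less by (intro mult_sin_less_rho_m) (auto simp: s field_simps)
  moreover have "odd s \<Longrightarrow> s \<ge> 7 \<Longrightarrow> real s * sin (2 * pi / real n) < rho_m s"
    unfolding s using n Arg_less by (intro mult_sin_less_rho_m) (auto simp: s field_simps)
  moreover have "5 * sin (2 * pi / 5) < rho_m s" if "s = 5"
  proof -
    have "5 < rho_m 5"
      using mult_sin_less_rho_m[of 4 "pi / 2"] Arg_psi_root_less[of 4] by simp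
    then show ?thesis
      unfolding that using sin_le_one[of "2 * pi / 5"] by linarith
  qed
  moreover have "pi < real s * sin (pi / real n)"
    using pi_less_Suc_mult_sin_pi_div[OF n] by (simp add: s)
  ultimately show ?thesis
    unfolding s_minus_1 by blast
qed

end
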